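(* Let $L$ be a generic length vector satisfying the strict triangle inequality. A vertex of $\Gamma(L)$ labeled $(I,J,K)$ is incident to exactly $2^{i}+2^{j}+2^{k}-6$ edges, where $i,j,k$ are the cardinalities of $I,J,K$ respectively.
   Context: Let $n\ge 4$ and $L=(l_1,\dots,l_n)$ be positive reals with $l_i<\sum_{j\ne i}l_j$ for every $i$ (strict triangle inequality), and generic: there is no $J\subseteq[n]$ with $\sum_{i\in J}l_i=\sum_{i\notin J}l_i$. Here $[n]=\{1,\dots,n\}$ and $|L|=\sum_{i=1}^n l_i$. A set $I\subseteq[n]$ is short if $\sum_{i\in I}l_i<|L|/2$ and long otherwise. A cyclically ordered partition of $[n]$ into $k$ parts is a sequence $(A_1,\dots,A_k)$ of pairwise disjoint nonempty sets with union $[n]$, considered up to cyclic shifts $(A_1,\dots,A_k)\sim(A_2,\dots,A_k,A_1)$; there is no ordering inside a part. It is admissible if every part is short. The graph $\Gamma(L)$ has as vertices the admissible cyclically ordered partitions of $[n]$ into 3 parts, written $(I,J,K)$, and as edges the admissible cyclically ordered partitions into 4 parts $(A,B,C,D)$; such an edge is incident to each of the partitions $(A\cup B,C,D)$, $(A,B\cup C,D)$, $(A,B,C\cup D)$, $(D\cup A,B,C)$ that is admissible. *)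

theory Defs
  imports Complex_Main
begin

definition total_len :: "(nat \<Rightarrow> real) \<Rightarrow> nat \<Rightarrow> real" where
  "total_len l n = (\<Sum>i\<in>{1..n}. l i)"

definition short :: "(nat \<Rightarrow> real) \<Rightarrow> nat \<Rightarrow> nat set \<Rightarrow> bool" where
  "short l n S \<longleftrightarrow> (\<Sum>i\<in>S. l i) < total_len l n / 2"

definition strict_triangle :: "(nat \<Rightarrow> real) \<Rightarrow> nat \<Rightarrow> bool" where
  "strict_triangle l n \<longleftrightarrow> (\<forall>i\<in>{1..n}. l i < (\<Sum>j\<in>{1..n} - {i}. l j))"

definition generic :: "(nat \<Rightarrow> real) \<Rightarrow> nat \<Rightarrow> bool" where
  "generic l n \<longleftrightarrow> (\<forall>J\<subseteq>{1..n}. (\<Sum>i\<in>J. l i) \<noteq> (\<Sum>i\<in>{1..n} - J. l i))"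

definition ordered_partition :: "nat \<Rightarrow> nat set list \<Rightarrow> bool" where
  "ordered_partition n xs \<longleftrightarrow>
     (\<forall>A\<in>set xs. A \<noteq> {}) \<and>
     (\<forall>i<length xs. \<forall>j<length xs. i \<noteq> j \<longrightarrow> xs ! i \<inter> xs ! j = {}) \<and>
     \<Union>(set xs) = {1..n}"

text \<open>Cyclically ordered sequence: equivalence class under cyclic shifts.\<close>
definition cyc :: "'a list \<Rightarrow> 'a list set" where
  "cyc xs = {rotate k xs | k. True}"

definition adm_cyc_partitions :: "(nat \<Rightarrow> real) \<Rightarrow> nat \<Rightarrow> nat \<Rightarrow> nat set list set set" where
  "adm_cyc_partitions l n k =
     {cyc xs | xs. length xs = k \<and> ordered_partition n xs \<and> (\<forall>A\<in>set xs. short l n A)}"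

definition Gamma_vertices :: "(nat \<Rightarrow> real) \<Rightarrow> nat \<Rightarrow> nat set list set set" where
  "Gamma_vertices l n = adm_cyc_partitions l n 3"

definition Gamma_edges :: "(nat \<Rightarrow> real) \<Rightarrow> nat \<Rightarrow> nat set list set set" where
  "Gamma_edges l n = adm_cyc_partitions l n 4"

definition incident :: "nat set list set \<Rightarrow> nat set list set \<Rightarrow> bool" where
  "incident e v \<longleftrightarrow> (\<exists>A B C D. [A, B, C, D] \<in> e \<and>
      v \<in> {cyc [A \<union> B, C, D], cyc [A, B \<union> C, D], cyc [A, B, C \<union> D], cyc [D \<union> A, B, C]})"

end

theory Submission
  imports Defs "HOL-Number_Theory.Cong"
begin

text \<open>An edge incident to the vertex (I, J, K) arises by splitting one of the three parts into an
  ordered pair of nonempty pieces; conversely every such split is an admissible 4-partition, since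
  subsets of short sets are short. A part P admits 2^|P| - 2 ordered splits, and because the parts
  of the vertex are nonempty and disjoint, different splits yield different cyclically ordered
  partitions.\<close>

lemma cyc_rotate [simp]: "cyc (rotate k xs) = cyc xs"
proof -
  have "rotate j xs \<in> cyc (rotate k xs)" for j
  proof (cases "xs = []")
    case False
    then have "k \<le> length xs * k" by (cases xs) auto
    then have "j + length xs * k - k + k = j + length xs * k" by linarith
    then have "rotate (j + length xs * k - k) (rotate k xs) = rotate (j + length xs * k) xs"
      by (metis rotate_rotate)
    also have "\<dots> = rotate j xs"
      by (metis mod_mult_self2 rotate_conv_mod)
    finally show ?thesis unfolding cyc_def by (metis (mono_tags, lifting) mem_Collect_eq)
  qed (simp add: cyc_def)
  then show ?thesis by (auto simp: cyc_def rotate_rotate)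
qed

lemma mem_cyc_self: "xs \<in> cyc xs"
  unfolding cyc_def by (metis (mono_tags) mem_Collect_eq rotate0 id_apply)

lemma cyc_eq_iff: "cyc xs = cyc ys \<longleftrightarrow> (\<exists>k. ys = rotate k xs)"
proof
  assume "cyc xs = cyc ys"
  then have "ys \<in> cyc xs" using mem_cyc_self by blast
  then show "\<exists>k. ys = rotate k xs" by (simp add: cyc_def)
qed auto

lemma cyc_eq_of_mem:
  assumes "xs \<in> cyc ys"
  shows "cyc xs = cyc ys"
proof -
  obtain k where "xs = rotate k ys" using assms by (auto simp: cyc_def)
  then show ?thesis by simp
qed

lemma rotate_list3_cases: "rotate k [a, b, c] \<in> {[a, b, c], [b, c, a], [c, a, b]}"
proof -
  have "rotate k [a, b, c] = rotate (k mod 3) [a, b, c]"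
    using rotate_conv_mod[of k "[a, b, c]"] by simp
  moreover have "k mod 3 = 0 \<or> k mod 3 = 1 \<or> k mod 3 = 2" by presburger
  moreover have "rotate 1 [a, b, c] = [b, c, a]" "rotate 2 [a, b, c] = [c, a, b]"
    by (simp_all add: numeral_eq_Suc)
  ultimately show ?thesis by (elim disjE) simp_all
qed

lemma rotate_list4_cases:
  "rotate k [a, b, c, d] \<in> {[a, b, c, d], [b, c, d, a], [c, d, a, b], [d, a, b, c]}"
proof -
  have "rotate k [a, b, c, d] = rotate (k mod 4) [a, b, c, d]"
    using rotate_conv_mod[of k "[a, b, c, d]"] by simp
  moreover have "k mod 4 = 0 \<or> k mod 4 = 1 \<or> k mod 4 = 2 \<or> k mod 4 = 3" by presburger
  moreover have "rotate 1 [a, b, c, d] = [b, c, d, a]" "rotate 2 [a, b, c, d] = [c, d, a, b]"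
      "rotate 3 [a, b, c, d] = [d, a, b, c]"
    by (simp_all add: numeral_eq_Suc)
  ultimately show ?thesis by (elim disjE) simp_all
qed

lemma cyc3_eq_iff: "cyc [a, b, c] = cyc xs \<longleftrightarrow> xs \<in> {[a, b, c], [b, c, a], [c, a, b]}"
proof
  assume "xs \<in> {[a, b, c], [b, c, a], [c, a, b]}"
  then show "cyc [a, b, c] = cyc xs"
    using cyc_rotate[of 1 "[a, b, c]"] cyc_rotate[of 2 "[a, b, c]"] by (auto simp: numeral_eq_Suc)
qed (use rotate_list3_cases cyc_eq_iff in metis)

lemma cyc4_eq_iff:
  "cyc [a, b, c, d] = cyc xs \<longleftrightarrow> xs \<in> {[a, b, c, d], [b, c, d, a], [c, d, a, b], [d, a, b, c]}"
proof
  assume "xs \<in> {[a, b, c, d], [b, c, d, a], [c, d, a, b], [d, a, b, c]}"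
  then show "cyc [a, b, c, d] = cyc xs"
    using cyc_rotate[of 1 "[a, b, c, d]"] cyc_rotate[of 2 "[a, b, c, d]"]
      cyc_rotate[of 3 "[a, b, c, d]"]
    by (auto simp: numeral_eq_Suc)
qed (use rotate_list4_cases cyc_eq_iff in metis)

lemma ordered_partition_rotate:
  assumes "ordered_partition n xs"
  shows "ordered_partition n (rotate k xs)"
proof -
  let ?L = "length xs"
  have "rotate k xs ! i \<inter> rotate k xs ! j = {}" if "i < ?L" "j < ?L" "i \<noteq> j" for i j
  proof -
    have "(k + i) mod ?L \<noteq> (k + j) mod ?L"
      using that by (metis cong_add_lcancel_nat cong_def mod_less)
    moreover have "(k + i) mod ?L < ?L" "(k + j) mod ?L < ?L"
      using that(1) by (metis gr0I mod_less_divisor not_less_zero)+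
    ultimately show ?thesis
      using assms that unfolding ordered_partition_def by (simp add: nth_rotate)
  qed
  then show ?thesis using assms by (simp add: ordered_partition_def)
qed

lemma ordered_partition_3_iff:
  "ordered_partition n [A, B, C] \<longleftrightarrow> A \<noteq> {} \<and> B \<noteq> {} \<and> C \<noteq> {} \<and>
     A \<inter> B = {} \<and> A \<inter> C = {} \<and> B \<inter> C = {} \<and> A \<union> B \<union> C = {1..n}"
  unfolding ordered_partition_def
  by (simp add: All_less_Suc numeral_eq_Suc Un_assoc
      Int_commute[of B A] Int_commute[of C A] Int_commute[of C B]) argo

lemma ordered_partition_4_iff:
  "ordered_partition n [A, B, C, D] \<longleftrightarrow> A \<noteq> {} \<and> B \<noteq> {} \<and> C \<noteq> {} \<and> D \<noteq> {} \<and>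
     A \<inter> B = {} \<and> A \<inter> C = {} \<and> A \<inter> D = {} \<and> B \<inter> C = {} \<and> B \<inter> D = {} \<and> C \<inter> D = {} \<and>
     A \<union> B \<union> C \<union> D = {1..n}"
  unfolding ordered_partition_def
  by (simp add: All_less_Suc numeral_eq_Suc Un_assoc Int_commute[of B A] Int_commute[of C A]
      Int_commute[of D A] Int_commute[of C B] Int_commute[of D B] Int_commute[of D C]) argo

lemma mem_adm_cyc_partitions_iff:
  "cyc xs \<in> adm_cyc_partitions l n k \<longleftrightarrow>
     length xs = k \<and> ordered_partition n xs \<and> (\<forall>A\<in>set xs. short l n A)"
proof
  assume "cyc xs \<in> adm_cyc_partitions l n k"
  then obtain ys where "cyc ys = cyc xs" "length ys = k" "ordered_partition n ys"
      "\<forall>A\<in>set ys. short l n A"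
    unfolding adm_cyc_partitions_def by auto
  moreover from this(1) obtain j where "xs = rotate j ys" by (auto simp: cyc_eq_iff)
  ultimately show "length xs = k \<and> ordered_partition n xs \<and> (\<forall>A\<in>set xs. short l n A)"
    by (simp add: ordered_partition_rotate)
qed (auto simp: adm_cyc_partitions_def)

lemma short_subset:
  assumes "short l n P" "X \<subseteq> P" "finite P" "\<forall>i\<in>P. 0 \<le> l i"
  shows "short l n X"
proof -
  have "(\<Sum>i\<in>X. l i) \<le> (\<Sum>i\<in>P. l i)"
    using assms(2-4) by (intro sum_mono2) auto
  then show ?thesis using assms(1) by (simp add: short_def)
qed

definition nontrivial_subsets :: "'a set \<Rightarrow> 'a set set" where
  "nontrivial_subsets P = {X. X \<subseteq> P \<and> X \<noteq> {} \<and> X \<noteq> P}"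

lemma card_nontrivial_subsets:
  assumes "finite P" "P \<noteq> {}"
  shows "card (nontrivial_subsets P) = 2 ^ card P - 2"
proof -
  have "nontrivial_subsets P = Pow P - {{}, P}" unfolding nontrivial_subsets_def by auto
  moreover have "card {{}, P} = 2" using assms(2) by simp
  ultimately show ?thesis using assms(1) by (simp add: card_Diff_subset card_Pow)
qed

definition split_refinements :: "'a set \<Rightarrow> 'a set \<Rightarrow> 'a set \<Rightarrow> 'a set list set set" where
  "split_refinements P Q R = (\<lambda>X. cyc [X, P - X, Q, R]) ` nontrivial_subsets P"

definition refinements :: "'a set \<Rightarrow> 'a set \<Rightarrow> 'a set \<Rightarrow> 'a set list set set" where
  "refinements P Q R = split_refinements P Q R \<union> split_refinements Q R P \<union> split_refinements R P Q"

lemma refinements_rotate: "refinements Q R P = refinements P Q R"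
  unfolding refinements_def by blast

lemma card_split_refinements:
  assumes "finite P" "P \<noteq> {}" "Q \<noteq> {}" "R \<noteq> {}" "P \<inter> Q = {}" "P \<inter> R = {}" "Q \<inter> R = {}"
  shows "card (split_refinements P Q R) = 2 ^ card P - 2"
proof -
  have "inj_on (\<lambda>X. cyc [X, P - X, Q, R]) (nontrivial_subsets P)"
  proof (rule inj_onI)
    fix X Y assume "X \<in> nontrivial_subsets P" "Y \<in> nontrivial_subsets P"
      and "cyc [X, P - X, Q, R] = cyc [Y, P - Y, Q, R]"
    then show "X = Y" using assms unfolding cyc4_eq_iff nontrivial_subsets_def by auto
  qed
  then show ?thesis
    using assms by (simp add: split_refinements_def card_image card_nontrivial_subsets)
qed

lemma split_refinements_disjoint:
  assumes "P \<noteq> {}" "Q \<noteq> {}" "R \<noteq> {}" "P \<inter> Q = {}" "P \<inter> R = {}" "Q \<inter> R = {}"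
  shows "split_refinements P Q R \<inter> split_refinements Q R P = {}"
proof -
  have "cyc [X, P - X, Q, R] \<noteq> cyc [Y, Q - Y, R, P]"
    if "X \<in> nontrivial_subsets P" "Y \<in> nontrivial_subsets Q" for X Y
    using that assms unfolding cyc4_eq_iff nontrivial_subsets_def by auto
  then show ?thesis unfolding split_refinements_def by blast
qed

lemma card_refinements:
  assumes "finite P" "finite Q" "finite R" "P \<noteq> {}" "Q \<noteq> {}" "R \<noteq> {}"
    and "P \<inter> Q = {}" "P \<inter> R = {}" "Q \<inter> R = {}"
  shows "card (refinements P Q R) = (2 ^ card P - 2) + (2 ^ card Q - 2) + (2 ^ card R - 2)"
proof -
  let ?SP = "split_refinements P Q R" and ?SQ = "split_refinements Q R P"
    and ?SR = "split_refinements R P Q"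
  have fin: "finite ?SP" "finite ?SQ" "finite ?SR"
    using assms(1-3) unfolding split_refinements_def nontrivial_subsets_def by simp_all
  have "?SP \<inter> ?SQ = {}" "?SQ \<inter> ?SR = {}" "?SR \<inter> ?SP = {}"
    by (rule split_refinements_disjoint; use assms in blast)+
  then have "(?SP \<union> ?SQ) \<inter> ?SR = {}" "?SP \<inter> ?SQ = {}" by blast+
  then have "card (refinements P Q R) = card ?SP + card ?SQ + card ?SR"
    unfolding refinements_def using fin by (simp add: card_Un_disjoint)
  moreover have "card ?SP = 2 ^ card P - 2" "card ?SQ = 2 ^ card Q - 2" "card ?SR = 2 ^ card R - 2"
    by (rule card_split_refinements; use assms in blast)+
  ultimately show ?thesis by simp
qed

lemma split_refinements_subset_incident_edges:
  assumes "cyc [P, Q, R] \<in> Gamma_vertices l n" and pos: "\<forall>i\<in>{1..n}. 0 < l i"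
  shows "split_refinements P Q R \<subseteq> {e \<in> Gamma_edges l n. incident e (cyc [P, Q, R])}"
proof
  fix e assume "e \<in> split_refinements P Q R"
  then obtain X where X: "X \<in> nontrivial_subsets P" and e: "e = cyc [X, P - X, Q, R]"
    unfolding split_refinements_def by blast
  have part: "ordered_partition n [P, Q, R]" and short: "\<forall>A\<in>{P, Q, R}. short l n A"
    using assms(1) by (simp_all add: Gamma_vertices_def mem_adm_cyc_partitions_iff)
  then have "P \<subseteq> {1..n}" by (auto simp: ordered_partition_3_iff)
  then have "finite P" "\<forall>i\<in>P. 0 \<le> l i" using pos finite_subset by fastforce+
  then have "short l n X" "short l n (P - X)"
    using X short short_subset[of l n P] by (auto simp: nontrivial_subsets_def)
  moreover have "ordered_partition n [X, P - X, Q, R]"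
    using part X by (auto simp: ordered_partition_3_iff ordered_partition_4_iff nontrivial_subsets_def)
  ultimately have "e \<in> Gamma_edges l n"
    using short by (simp add: e Gamma_edges_def mem_adm_cyc_partitions_iff)
  moreover have "X \<union> (P - X) = P" using X by (auto simp: nontrivial_subsets_def)
  then have "incident e (cyc [P, Q, R])"
    unfolding incident_def e using mem_cyc_self by fastforce
  ultimately show "e \<in> {e \<in> Gamma_edges l n. incident e (cyc [P, Q, R])}" by blast
qed

lemma refinements_subset_incident_edges:
  assumes "cyc [P, Q, R] \<in> Gamma_vertices l n" "\<forall>i\<in>{1..n}. 0 < l i"
  shows "refinements P Q R \<subseteq> {e \<in> Gamma_edges l n. incident e (cyc [P, Q, R])}"
proof -
  have rot: "cyc [Q, R, P] = cyc [P, Q, R]" "cyc [R, P, Q] = cyc [P, Q, R]"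
    by (simp_all add: cyc3_eq_iff)
  show ?thesis
    unfolding refinements_def
    using split_refinements_subset_incident_edges[OF assms]
      split_refinements_subset_incident_edges[of Q R P l n]
      split_refinements_subset_incident_edges[of R P Q l n]
    by (simp add: rot assms)
qed

lemma merge_first_mem_refinements:
  assumes "ordered_partition n [A, B, C, D]" "cyc [A \<union> B, C, D] = cyc [I, J, K]"
  shows "cyc [A, B, C, D] \<in> refinements I J K"
proof -
  have "A \<in> nontrivial_subsets (A \<union> B)" "B = (A \<union> B) - A"
    using assms(1) by (auto simp: ordered_partition_4_iff nontrivial_subsets_def)
  then have "cyc [A, B, C, D] \<in> refinements (A \<union> B) C D"
    unfolding refinements_def split_refinements_def by (metis (no_types, lifting) UnI1 image_eqI)
  moreover have "refinements (A \<union> B) C D = refinements I J K"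
    using assms(2) refinements_rotate by (auto simp: cyc3_eq_iff)
  ultimately show ?thesis by simp
qed

lemma incident_edges_subset_refinements:
  assumes "e \<in> Gamma_edges l n" "incident e (cyc [I, J, K])"
  shows "e \<in> refinements I J K"
proof -
  obtain A B C D where ABCD: "[A, B, C, D] \<in> e"
    and v: "cyc [I, J, K]
      \<in> {cyc [A \<union> B, C, D], cyc [A, B \<union> C, D], cyc [A, B, C \<union> D], cyc [D \<union> A, B, C]}"
    using assms(2) unfolding incident_def by blast
  obtain ys where e: "e = cyc ys"
    using assms(1) unfolding Gamma_edges_def adm_cyc_partitions_def by blast
  then have e': "e = cyc [A, B, C, D]" using ABCD cyc_eq_of_mem by metis
  have rot: "e = cyc [B, C, D, A]" "e = cyc [C, D, A, B]" "e = cyc [D, A, B, C]"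
    using e' by (simp_all add: cyc4_eq_iff)
  \<comment> \<open>Each of the four merges of the edge merges the first two parts of one of its rotations.\<close>
  have rot_merge:
    "cyc [A, B \<union> C, D] = cyc [B \<union> C, D, A]" "cyc [A, B, C \<union> D] = cyc [C \<union> D, A, B]"
    by (simp_all add: cyc3_eq_iff)
  from v consider "cyc [A \<union> B, C, D] = cyc [I, J, K]" | "cyc [B \<union> C, D, A] = cyc [I, J, K]"
    | "cyc [C \<union> D, A, B] = cyc [I, J, K]" | "cyc [D \<union> A, B, C] = cyc [I, J, K]"
    unfolding rot_merge by blast
  then obtain P Q R S where "e = cyc [P, Q, R, S]" and merge: "cyc [P \<union> Q, R, S] = cyc [I, J, K]"
    using e' rot by cases blast+
  moreover have "ordered_partition n [P, Q, R, S]"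
    using assms(1)
    by (simp add: \<open>e = cyc [P, Q, R, S]\<close> Gamma_edges_def mem_adm_cyc_partitions_iff)
  ultimately show ?thesis using merge merge_first_mem_refinements by blast
qed

theorem mainTheorem3:
  fixes l :: "nat \<Rightarrow> real" and n :: nat and I J K :: "nat set"
  assumes "n \<ge> 4"
    and "\<forall>i\<in>{1..n}. l i > 0"
    and "strict_triangle l n"
    and "generic l n"
    and "cyc [I, J, K] \<in> Gamma_vertices l n"
  shows "int (card {e \<in> Gamma_edges l n. incident e (cyc [I, J, K])})
           = 2 ^ card I + 2 ^ card J + 2 ^ card K - 6"
proof -
  have "ordered_partition n [I, J, K]"
    using assms(5) by (simp add: Gamma_vertices_def mem_adm_cyc_partitions_iff)
  then have parts: "I \<noteq> {}" "J \<noteq> {}" "K \<noteq> {}" "I \<inter> J = {}" "I \<inter> K = {}" "J \<inter> K = {}"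
    and cover: "I \<union> J \<union> K = {1..n}"
    by (simp_all add: ordered_partition_3_iff)
  have fin: "finite I" "finite J" "finite K"
    using finite_atLeastAtMost[of 1 n] unfolding cover[symmetric] by simp_all
  have "{e \<in> Gamma_edges l n. incident e (cyc [I, J, K])} = refinements I J K"
    using refinements_subset_incident_edges[OF assms(5,2)] incident_edges_subset_refinements
    by blast
  then have "card {e \<in> Gamma_edges l n. incident e (cyc [I, J, K])}
      = (2 ^ card I - 2) + (2 ^ card J - 2) + (2 ^ card K - 2)"
    using card_refinements[OF fin parts] by simp
  moreover have "int (2 ^ card X - 2) = 2 ^ card X - 2"
    if "finite X" "X \<noteq> {}" for X :: "nat set"
    using that by (simp add: of_nat_diff card_gt_0_iff self_le_power)
  ultimately show ?thesis using fin parts by (simp only: of_nat_add) simp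
qed

end
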